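(* Let $G$ be a finite simple graph and let $u,v\in V(G)$ with $uv\in E(G)$. Suppose that $\hat{E}_{u,v}=\emptyset$, where $\hat{E}_{u,v}=\{xy\in E(G): x\in N_G(u,\bar{v}),\ y\in N_G(\bar{u},v)\}$. Then $\mathbf{a}_4(G)\ge \mathbf{a}_4(G_{u\rightarrow v})$, and the inequality is strict if $N_G(\bar{u},v)\neq\emptyset$ and $N_G(u,\bar{v})\neq\emptyset$.
   Context: For a graph $G$ on $n$ vertices with adjacency matrix $\mathbf{A}(G)$, write $\det(\lambda \mathbf{I}-\mathbf{A}(G))=\sum_{i=0}^n \mathbf{a}_i(G)\lambda^{n-i}$; $\mathbf{a}_4(G)$ is the fourth adjacency coefficient (equivalently, $\mathbf{a}_4(G)$ equals the number of 2-matchings of $G$ minus twice the number of 4-cycles of $G$). For $u,v\in V(G)$: $N_G(u,\bar{v})=\{x\in V(G)\setminus\{u,v\}: xu\in E(G),\ xv\notin E(G)\}$ and $N_G(\bar{u},v)=\{x\in V(G)\setminus\{u,v\}: xv\in E(G),\ xu\notin E(G)\}$. The compression $G_{u\rightarrow v}$ is the graph obtained from $G$ by deleting all edges between $u$ and $N_G(u,\bar{v})$ and adding all edges between $v$ and $N_G(u,\bar{v})$. *)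

theory Defs
  imports "HOL-Analysis.Analysis" "HOL-Computational_Algebra.Polynomial"
begin

definition simple_graph :: "('v::finite \<Rightarrow> 'v \<Rightarrow> bool) \<Rightarrow> bool" where
  "simple_graph E \<longleftrightarrow> (\<forall>x y. E x y \<longrightarrow> E y x) \<and> (\<forall>x. \<not> E x x)"

definition adj_matrix :: "('v::finite \<Rightarrow> 'v \<Rightarrow> bool) \<Rightarrow> int ^'v ^'v" where
  "adj_matrix E = (\<chi> i j. if E i j then 1 else 0)"

definition char_poly_graph :: "('v::finite \<Rightarrow> 'v \<Rightarrow> bool) \<Rightarrow> int poly" where
  "char_poly_graph E = det (\<chi> i j. (if i = j then [:0, 1:] else 0) - [:adj_matrix E $ i $ j:])"

definition adj_coeff :: "nat \<Rightarrow> ('v::finite \<Rightarrow> 'v \<Rightarrow> bool) \<Rightarrow> int" where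
  "adj_coeff i E = (if i \<le> CARD('v) then coeff (char_poly_graph E) (CARD('v) - i) else 0)"

definition N_out :: "('v \<Rightarrow> 'v \<Rightarrow> bool) \<Rightarrow> 'v \<Rightarrow> 'v \<Rightarrow> 'v set" where
  "N_out E u v = {x. x \<noteq> u \<and> x \<noteq> v \<and> E x u \<and> \<not> E x v}"

text \<open>N_G(u, bar v) = N_out E u v ;  N_G(bar u, v) = N_out E v u.\<close>

definition compression :: "('v \<Rightarrow> 'v \<Rightarrow> bool) \<Rightarrow> 'v \<Rightarrow> 'v \<Rightarrow> ('v \<Rightarrow> 'v \<Rightarrow> bool)" where
  "compression E u v = (\<lambda>x y.
     (E x y \<and> \<not> (\<exists>w \<in> N_out E u v. {x, y} = {u, w}))
     \<or> (\<exists>w \<in> N_out E u v. {x, y} = {v, w}))"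

definition E_hat :: "('v \<Rightarrow> 'v \<Rightarrow> bool) \<Rightarrow> 'v \<Rightarrow> 'v \<Rightarrow> ('v \<times> 'v) set" where
  "E_hat E u v = {(x, y). E x y \<and> x \<in> N_out E u v \<and> y \<in> N_out E v u}"

end

(*
  The coefficient a_k of a loopless graph is (-1)^k times the sum of its k x k principal
  adjacency minors, and the principal minor on four vertices counts perfect matchings minus
  twice the 4-cycles. Sort the 4-sets by how they meet {u, v}. Sets avoiding u and v do not
  see the compression. Sets S + u and S + v with S avoiding u, v are compared in pairs: the
  compression replaces the two apex neighbourhoods in S by their intersection and their
  union, the matching count is modular in the apex neighbourhood and the 4-cycle count
  supermodular, so the pair's total cannot grow. A set {u, v, x, y} could only gain from an
  edge xy with x in N(u, bar v) and y in N(bar u, v), which the hypothesis excludes; and for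
  such x, y without the edge xy it strictly loses the matching {ux, vy}.
*)
theory Submission
  imports Defs
begin

definition adj_minor :: "('v \<Rightarrow> 'v \<Rightarrow> bool) \<Rightarrow> 'v set \<Rightarrow> int" where
  "adj_minor E S = (\<Sum>p | p permutes S. sign p * (\<Prod>i\<in>S. of_bool (E i (p i))))"

lemma adj_minor_cong:
  assumes "\<And>x y. x \<in> S \<Longrightarrow> y \<in> S \<Longrightarrow> E x y = E' x y"
  shows "adj_minor E S = adj_minor E' S"
  unfolding adj_minor_def
proof (rule sum.cong[OF refl])
  fix p assume "p \<in> {p. p permutes S}"
  then have "\<And>i. i \<in> S \<Longrightarrow> p i \<in> S"
    by (simp add: permutes_in_image)
  then show "sign p * (\<Prod>i\<in>S. of_bool (E i (p i))) = sign p * (\<Prod>i\<in>S. of_bool (E' i (p i)))"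
    using assms by (auto intro!: prod.cong)
qed

lemma adj_minor_eq_sum_derangements:
  assumes irrefl: "\<And>x. \<not> E x x" and "finite S"
  shows "adj_minor E S =
    (\<Sum>p | p permutes S \<and> {i. p i \<noteq> i} = S. sign p * (\<Prod>i\<in>S. of_bool (E i (p i))))"
  unfolding adj_minor_def
proof (rule sum.mono_neutral_right)
  show "finite {p. p permutes S}"
    using \<open>finite S\<close> by (rule finite_permutations)
  show "\<forall>p \<in> {p. p permutes S} - {p. p permutes S \<and> {i. p i \<noteq> i} = S}.
          sign p * (\<Prod>i\<in>S. of_bool (E i (p i))) = (0::int)"
  proof
    fix p assume "p \<in> {p. p permutes S} - {p. p permutes S \<and> {i. p i \<noteq> i} = S}"
    moreover from this have "{i. p i \<noteq> i} \<subseteq> S"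
      by (auto simp: permutes_def)
    ultimately obtain i where "i \<in> S" "p i = i" by auto
    with irrefl have "(\<Prod>i\<in>S. of_bool (E i (p i)) :: int) = 0"
      using \<open>finite S\<close> by (intro prod_zero bexI[where x = i]) simp_all
    then show "sign p * (\<Prod>i\<in>S. of_bool (E i (p i))) = (0::int)"
      by simp
  qed
qed auto

lemma prod_char_matrix_entries:
  fixes E :: "'v::finite \<Rightarrow> 'v \<Rightarrow> bool"
  assumes irrefl: "\<And>x. \<not> E x x"
  shows "(\<Prod>i\<in>UNIV. ((\<chi> i j. (if i = j then [:0, 1:] else 0) - [:adj_matrix E $ i $ j:])
            :: int poly ^'v ^'v) $ i $ p i)
     = monom (\<Prod>i | p i \<noteq> i. - of_bool (E i (p i))) (card {i. p i = i})"
proof -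
  have "(\<Prod>i\<in>UNIV. ((\<chi> i j. (if i = j then [:0, 1:] else 0) - [:adj_matrix E $ i $ j:])
            :: int poly ^'v ^'v) $ i $ p i)
      = (\<Prod>i\<in>UNIV. if p i = i then [:0, 1:] else [:- of_bool (E i (p i)):])"
    by (rule prod.cong) (auto simp: adj_matrix_def irrefl)
  also have "\<dots> = [:0, 1:] ^ card {i. p i = i} * [:\<Prod>i | p i \<noteq> i. - of_bool (E i (p i)):]"
    by (simp add: prod.If_cases Compl_eq prod_to_poly)
  also have "\<dots> = monom (\<Prod>i | p i \<noteq> i. - of_bool (E i (p i))) (card {i. p i = i})"
    by (simp add: monom_altdef)
  finally show ?thesis .
qed

lemma coeff_char_poly_graph:
  fixes E :: "'v::finite \<Rightarrow> 'v \<Rightarrow> bool"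
  assumes irrefl: "\<And>x. \<not> E x x"
  shows "coeff (char_poly_graph E) m = (\<Sum>p | p permutes (UNIV::'v set).
     if card {i. p i = i} = m then sign p * (\<Prod>i | p i \<noteq> i. - of_bool (E i (p i))) else 0)"
  unfolding char_poly_graph_def det_def coeff_sum prod_char_matrix_entries[OF irrefl]
  by (rule sum.cong) (auto simp: of_int_poly coeff_monom)

lemma adj_coeff_eq_sum_permutations:
  fixes E :: "'v::finite \<Rightarrow> 'v \<Rightarrow> bool"
  assumes irrefl: "\<And>x. \<not> E x x" and "k \<le> CARD('v)"
  shows "adj_coeff k E = (-1) ^ k * (\<Sum>p | p permutes (UNIV::'v set) \<and> card {i. p i \<noteq> i} = k.
           sign p * (\<Prod>i | p i \<noteq> i. of_bool (E i (p i))))"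
proof -
  have fixed_points: "card {i. p i = i} = CARD('v) - k \<longleftrightarrow> card {i. p i \<noteq> i} = k"
    for p :: "'v \<Rightarrow> 'v"
  proof -
    have "{i. p i = i} = UNIV - {i. p i \<noteq> i}"
      by auto
    then have "card {i. p i = i} = CARD('v) - card {i. p i \<noteq> i}"
      by (simp add: card_Diff_subset)
    moreover have "card {i. p i \<noteq> i} \<le> CARD('v)"
      by (rule card_mono) auto
    ultimately show ?thesis
      using \<open>k \<le> CARD('v)\<close> by arith
  qed
  show ?thesis
    using \<open>k \<le> CARD('v)\<close>
    by (simp add: adj_coeff_def coeff_char_poly_graph[OF irrefl] fixed_points prod_uminus
        sum_distrib_left sum.If_cases finite_permutations Collect_conj_eq mult_ac cong: if_cong)
qed

lemma sum_minors_eq_sum_permutations: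
  fixes E :: "'v::finite \<Rightarrow> 'v \<Rightarrow> bool"
  assumes irrefl: "\<And>x. \<not> E x x"
  shows "(\<Sum>S | card S = k. adj_minor E S) = (\<Sum>p | p permutes (UNIV::'v set) \<and> card {i. p i \<noteq> i} = k.
           sign p * (\<Prod>i | p i \<noteq> i. of_bool (E i (p i))))"
    (is "_ = (\<Sum>p \<in> ?P. ?Y p)")
proof -
  have "(\<Sum>S | card S = k. adj_minor E S) = (\<Sum>S | card S = k. \<Sum>p \<in> ?P. if {i. p i \<noteq> i} = S then ?Y p else 0)"
  proof (rule sum.cong[OF refl])
    fix S :: "'v set" assume "S \<in> {S. card S = k}"
    then have derangements: "{p. p permutes UNIV \<and> card {i. p i \<noteq> i} = k \<and> {i. p i \<noteq> i} = S}
        = {p. p permutes S \<and> {i. p i \<noteq> i} = S}"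
      by (auto simp: permutes_def)
    have "adj_minor E S = (\<Sum>p | p permutes S \<and> {i. p i \<noteq> i} = S. sign p * (\<Prod>i\<in>S. of_bool (E i (p i))))"
      by (simp add: adj_minor_eq_sum_derangements[OF irrefl])
    also have "\<dots> = (\<Sum>p | p permutes UNIV \<and> card {i. p i \<noteq> i} = k \<and> {i. p i \<noteq> i} = S. ?Y p)"
      unfolding derangements by (intro sum.cong) auto
    also have "\<dots> = (\<Sum>p \<in> ?P. if {i. p i \<noteq> i} = S then ?Y p else 0)"
      by (simp add: sum.If_cases finite_permutations Collect_conj_eq Int_assoc)
    finally show "adj_minor E S = (\<Sum>p \<in> ?P. if {i. p i \<noteq> i} = S then ?Y p else 0)" .
  qed
  also have "\<dots> = (\<Sum>p \<in> ?P. \<Sum>S | card S = k. if {i. p i \<noteq> i} = S then ?Y p else 0)"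
    by (rule sum.swap)
  also have "\<dots> = (\<Sum>p \<in> ?P. ?Y p)"
    by (intro sum.cong) (auto simp: sum.delta)
  finally show ?thesis .
qed

lemma adj_coeff_eq_sum_minors:
  fixes E :: "'v::finite \<Rightarrow> 'v \<Rightarrow> bool"
  assumes irrefl: "\<And>x. \<not> E x x"
  shows "adj_coeff k E = (-1) ^ k * (\<Sum>S | card S = k. adj_minor E S)"
proof (cases "k \<le> CARD('v)")
  case True
  then show ?thesis
    by (simp add: adj_coeff_eq_sum_permutations[OF irrefl] sum_minors_eq_sum_permutations[OF irrefl])
next
  case False
  then have "{S :: 'v set. card S = k} = {}"
    using card_mono[of UNIV, OF finite subset_UNIV] by auto
  with False show ?thesis
    by (simp add: adj_coeff_def)
qed

lemma sum_over_permutations_4: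
  assumes "distinct [a, b, c, d]"
  shows "(\<Sum>p | p permutes {a, b, c, d}. f p) =
    (\<Sum>x\<in>{a, b, c, d}. \<Sum>y\<in>{b, c, d}. \<Sum>z\<in>{c, d}.
       f (Transposition.transpose a x \<circ> Transposition.transpose b y \<circ> Transposition.transpose c z))"
proof -
  have "(\<Sum>p | p permutes insert a {b, c, d}. f p)
      = (\<Sum>x\<in>{a, b, c, d}. \<Sum>q | q permutes insert b {c, d}.
           f (Transposition.transpose a x \<circ> q))"
    by (rule sum_over_permutations_insert) (use assms in auto)
  also have "\<dots> = (\<Sum>x\<in>{a, b, c, d}. \<Sum>y\<in>{b, c, d}. \<Sum>q | q permutes insert c {d}.
           f (Transposition.transpose a x \<circ> (Transposition.transpose b y \<circ> q)))"
    by (intro sum.cong refl sum_over_permutations_insert) (use assms in auto)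
  also have "\<dots> = (\<Sum>x\<in>{a, b, c, d}. \<Sum>y\<in>{b, c, d}. \<Sum>z\<in>{c, d}. \<Sum>q | q permutes {d}.
           f (Transposition.transpose a x \<circ> (Transposition.transpose b y \<circ>
              (Transposition.transpose c z \<circ> q))))"
    by (intro sum.cong refl sum_over_permutations_insert) (use assms in auto)
  finally show ?thesis
    by (simp add: comp_assoc)
qed

definition quad_minor :: "bool \<Rightarrow> bool \<Rightarrow> bool \<Rightarrow> bool \<Rightarrow> bool \<Rightarrow> bool \<Rightarrow> int" where
  "quad_minor ab ac ad bc bd cd =
     of_bool (ab \<and> cd) + of_bool (ac \<and> bd) + of_bool (ad \<and> bc)
     - 2 * (of_bool (ab \<and> bc \<and> cd \<and> ad) + of_bool (ab \<and> bd \<and> cd \<and> ac) + of_bool (ac \<and> bc \<and> bd \<and> ad))"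

lemma adj_minor_4:
  assumes "distinct [a, b, c, d]" and "simple_graph E"
  shows "adj_minor E {a, b, c, d} = quad_minor (E a b) (E a c) (E a d) (E b c) (E b d) (E c d)"
proof -
  from \<open>simple_graph E\<close> have irrefl: "\<And>x. \<not> E x x" and sym: "\<And>x y. E x y = E y x"
    unfolding simple_graph_def by blast+
  have sign: "sign (Transposition.transpose a x \<circ> Transposition.transpose b y \<circ>
                     Transposition.transpose c z)
      = (if a = x then 1 else -1) * (if b = y then 1 else -1) * (if c = z then 1 else -1)" for x y z
    by (simp add: sign_compose sign_swap_id permutation_compose permutation_swap_id)
  from assms(1) have "a \<noteq> b" "a \<noteq> c" "a \<noteq> d" "b \<noteq> c" "b \<noteq> d" "c \<noteq> d"
    by auto
  then show ?thesis
    unfolding adj_minor_def sum_over_permutations_4[OF assms(1)]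
    by (simp add: sign irrefl sym[of b a] sym[of c a] sym[of d a] sym[of c b] sym[of d b] sym[of d c]
        quad_minor_def of_bool_conj)
qed

lemma quad_minor_apex_exchange:
  "quad_minor (ux \<and> vx) (uy \<and> vy) (uz \<and> vz) xy xz yz + quad_minor (vx \<or> ux) (vy \<or> uy) (vz \<or> uz) xy xz yz
     \<le> quad_minor ux uy uz xy xz yz + quad_minor vx vy vz xy xz yz"
  unfolding quad_minor_def
  by (cases ux; cases uy; cases uz; cases vx; cases vy; cases vz; cases xy; cases xz; cases yz) simp_all

lemma quad_minor_edge_exchange:
  assumes "\<not> (xy \<and> ux \<and> \<not> vx \<and> vy \<and> \<not> uy)" and "\<not> (xy \<and> uy \<and> \<not> vy \<and> vx \<and> \<not> ux)"
  shows "quad_minor uv (ux \<and> vx) (uy \<and> vy) (vx \<or> ux) (vy \<or> uy) xy \<le> quad_minor uv ux uy vx vy xy"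
  using assms unfolding quad_minor_def
  by (cases uv; cases ux; cases uy; cases vx; cases vy; cases xy) simp_all

lemma quad_minor_edge_exchange_strict:
  assumes "ux" "\<not> vx" "vy" "\<not> uy" "\<not> xy"
  shows "quad_minor uv (ux \<and> vx) (uy \<and> vy) (vx \<or> ux) (vy \<or> uy) xy < quad_minor uv ux uy vx vy xy"
  using assms unfolding quad_minor_def by simp

lemma compression_outside:
  assumes "x \<notin> {u, v}" and "y \<notin> {u, v}"
  shows "compression E u v x y = E x y"
  using assms unfolding compression_def by (auto simp: doubleton_eq_iff)

lemma compression_source:
  assumes "simple_graph E" and "x \<notin> {u, v}"
  shows "compression E u v u x = (E u x \<and> E v x)"
  using assms unfolding compression_def simple_graph_def N_out_def by (auto simp: doubleton_eq_iff)

lemma compression_target: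
  assumes "simple_graph E" and "x \<notin> {u, v}"
  shows "compression E u v v x = (E v x \<or> E u x)"
  using assms unfolding compression_def simple_graph_def N_out_def by (auto simp: doubleton_eq_iff)

lemma compression_source_target: "compression E u v u v = E u v"
  unfolding compression_def N_out_def by (auto simp: doubleton_eq_iff)

lemma simple_graph_compression:
  assumes "simple_graph E"
  shows "simple_graph (compression E u v)"
  using assms unfolding simple_graph_def compression_def N_out_def
  by (auto simp: insert_commute doubleton_eq_iff)

lemma sum_subsets_insert_card_Suc:
  assumes "finite A" and "a \<notin> A"
  shows "(\<Sum>S | S \<subseteq> insert a A \<and> card S = Suc k. f S)
       = (\<Sum>S | S \<subseteq> A \<and> card S = Suc k. f S) + (\<Sum>S | S \<subseteq> A \<and> card S = k. f (insert a S))"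
proof -
  have split: "{S. S \<subseteq> insert a A \<and> card S = Suc k}
      = {S. S \<subseteq> A \<and> card S = Suc k} \<union> insert a ` {S. S \<subseteq> A \<and> card S = k}"
  proof (intro set_eqI iffI)
    fix S assume S: "S \<in> {S. S \<subseteq> insert a A \<and> card S = Suc k}"
    then have "finite S"
      using \<open>finite A\<close> finite_subset by auto
    with S show "S \<in> {S. S \<subseteq> A \<and> card S = Suc k} \<union> insert a ` {S. S \<subseteq> A \<and> card S = k}"
      by (cases "a \<in> S") (auto simp: image_iff intro!: exI[of _ "S - {a}"])
  next
    fix S assume "S \<in> {S. S \<subseteq> A \<and> card S = Suc k} \<union> insert a ` {S. S \<subseteq> A \<and> card S = k}"
    then show "S \<in> {S. S \<subseteq> insert a A \<and> card S = Suc k}"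
      using \<open>finite A\<close> \<open>a \<notin> A\<close> by (auto simp: finite_subset card_insert_if)
  qed
  have disjoint: "{S. S \<subseteq> A \<and> card S = Suc k} \<inter> insert a ` {S. S \<subseteq> A \<and> card S = k} = {}"
    using \<open>a \<notin> A\<close> by auto
  have inj: "inj_on (insert a) {S. S \<subseteq> A \<and> card S = k}"
    using \<open>a \<notin> A\<close> by (auto simp: inj_on_def)
  show ?thesis
    unfolding split using \<open>finite A\<close>
    by (simp add: sum.union_disjoint[OF _ _ disjoint] sum.reindex[OF inj])
qed

lemma adj_coeff_4_split:
  fixes E :: "'v::finite \<Rightarrow> 'v \<Rightarrow> bool"
  assumes irrefl: "\<And>x. \<not> E x x" and "u \<noteq> v"
  shows "adj_coeff 4 E =
      (\<Sum>S | S \<subseteq> - {u, v} \<and> card S = 4. adj_minor E S)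
    + (\<Sum>S | S \<subseteq> - {u, v} \<and> card S = 3. adj_minor E (insert u S) + adj_minor E (insert v S))
    + (\<Sum>S | S \<subseteq> - {u, v} \<and> card S = 2. adj_minor E (insert u (insert v S)))"
proof -
  define R where "R = - {u, v}"
  have R: "finite R" "u \<notin> R" "v \<notin> R" "insert u (insert v R) = UNIV"
    unfolding R_def by auto
  have "adj_coeff 4 E = (\<Sum>S | S \<subseteq> insert u (insert v R) \<and> card S = 4. adj_minor E S)"
    by (simp add: adj_coeff_eq_sum_minors[OF irrefl] R(4))
  also have "\<dots> = (\<Sum>S | S \<subseteq> insert v R \<and> card S = 4. adj_minor E S)
                 + (\<Sum>S | S \<subseteq> insert v R \<and> card S = 3. adj_minor E (insert u S))"
    using sum_subsets_insert_card_Suc[of "insert v R" u, where k = 3] R \<open>u \<noteq> v\<close> by simp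
  also have "\<dots> = (\<Sum>S | S \<subseteq> R \<and> card S = 4. adj_minor E S)
                 + (\<Sum>S | S \<subseteq> R \<and> card S = 3. adj_minor E (insert v S))
                 + ((\<Sum>S | S \<subseteq> R \<and> card S = 3. adj_minor E (insert u S))
                 + (\<Sum>S | S \<subseteq> R \<and> card S = 2. adj_minor E (insert u (insert v S))))"
    using sum_subsets_insert_card_Suc[of R v, where k = 3]
      sum_subsets_insert_card_Suc[of R v, where k = 2 and f = "\<lambda>S. adj_minor E (insert u S)"] R
    by simp
  finally show ?thesis
    unfolding R_def by (simp add: sum.distrib)
qed

lemma adj_minor_compression_outside:
  assumes "S \<subseteq> - {u, v}"
  shows "adj_minor (compression E u v) S = adj_minor E S"
  using assms by (intro adj_minor_cong compression_outside) auto

lemma adj_minor_compression_triple_le: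
  assumes "simple_graph E" and "u \<noteq> v" and "S \<subseteq> - {u, v}" and "card S = 3"
  shows "adj_minor (compression E u v) (insert u S) + adj_minor (compression E u v) (insert v S)
       \<le> adj_minor E (insert u S) + adj_minor E (insert v S)"
proof -
  from \<open>card S = 3\<close> obtain x y z where S: "S = {x, y, z}" "distinct [x, y, z]"
    by (auto simp: card_3_iff)
  with \<open>S \<subseteq> - {u, v}\<close> have outside: "x \<noteq> u" "x \<noteq> v" "y \<noteq> u" "y \<noteq> v" "z \<noteq> u" "z \<noteq> v"
    by auto
  with S have distinct: "distinct [u, x, y, z]" "distinct [v, x, y, z]"
    by auto
  let ?G = "compression E u v"
  have simple_G: "simple_graph ?G"
    using \<open>simple_graph E\<close> by (rule simple_graph_compression)
  show ?thesis
    using quad_minor_apex_exchange[of "E u x" "E v x" "E u y" "E v y" "E u z" "E v z" "E x y" "E x z" "E y z"]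
    unfolding S
    by (simp add: adj_minor_4[OF distinct(1) simple_G] adj_minor_4[OF distinct(2) simple_G]
        adj_minor_4[OF distinct(1) \<open>simple_graph E\<close>] adj_minor_4[OF distinct(2) \<open>simple_graph E\<close>]
        compression_source[OF \<open>simple_graph E\<close>] compression_target[OF \<open>simple_graph E\<close>]
        compression_outside outside)
qed

lemma adj_minor_compression_pair:
  assumes "simple_graph E" and "u \<noteq> v" and "x \<notin> {u, v}" and "y \<notin> {u, v}" and "x \<noteq> y"
  shows "adj_minor (compression E u v) {u, v, x, y} =
    quad_minor (E u v) (E u x \<and> E v x) (E u y \<and> E v y) (E v x \<or> E u x) (E v y \<or> E u y) (E x y)"
proof -
  have "distinct [u, v, x, y]"
    using assms by auto
  then show ?thesis
    using assms by (simp add: adj_minor_4 simple_graph_compression compression_source_target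
        compression_source compression_target compression_outside)
qed

lemma adj_minor_compression_pair_le:
  assumes "simple_graph E" and "u \<noteq> v" and "E_hat E u v = {}" and "S \<subseteq> - {u, v}" and "card S = 2"
  shows "adj_minor (compression E u v) (insert u (insert v S)) \<le> adj_minor E (insert u (insert v S))"
proof -
  from \<open>card S = 2\<close> obtain x y where S: "S = {x, y}" "x \<noteq> y"
    by (auto simp: card_2_iff)
  with \<open>S \<subseteq> - {u, v}\<close> have outside: "x \<notin> {u, v}" "y \<notin> {u, v}"
    by auto
  have sym: "E a b = E b a" for a b
    using \<open>simple_graph E\<close> unfolding simple_graph_def by blast
  have no_cross_edge: "\<not> (E a b \<and> E u a \<and> \<not> E v a \<and> E v b \<and> \<not> E u b)" if "a \<notin> {u, v}" "b \<notin> {u, v}" for a b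
    using \<open>E_hat E u v = {}\<close> that unfolding E_hat_def N_out_def by (auto simp: sym)
  have "distinct [u, v, x, y]"
    using S outside \<open>u \<noteq> v\<close> by auto
  then show ?thesis
    unfolding S adj_minor_compression_pair[OF assms(1,2) outside S(2)]
      adj_minor_4[OF \<open>distinct [u, v, x, y]\<close> assms(1)]
    using no_cross_edge[OF outside] no_cross_edge[OF outside(2,1)]
    by (intro quad_minor_edge_exchange) (auto simp: sym[of x y])
qed

lemma adj_minor_compression_pair_less:
  assumes "simple_graph E" and "x \<in> N_out E u v" and "y \<in> N_out E v u" and "\<not> E x y"
  shows "adj_minor (compression E u v) {u, v, x, y} < adj_minor E {u, v, x, y}"
proof -
  have sym: "E a b = E b a" for a b
    using \<open>simple_graph E\<close> unfolding simple_graph_def by blast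
  from assms(2,3) have x: "x \<notin> {u, v}" "E u x" "\<not> E v x" and y: "y \<notin> {u, v}" "E v y" "\<not> E u y"
    unfolding N_out_def by (auto simp: sym)
  then have "u \<noteq> v" "x \<noteq> y" and distinct: "distinct [u, v, x, y]"
    by auto
  then show ?thesis
    unfolding adj_minor_compression_pair[OF assms(1) \<open>u \<noteq> v\<close> x(1) y(1) \<open>x \<noteq> y\<close>]
      adj_minor_4[OF distinct assms(1)]
    using x y \<open>\<not> E x y\<close> by (intro quad_minor_edge_exchange_strict) auto
qed

lemma sum_minors_compression_pairs_le:
  assumes "simple_graph E" and "u \<noteq> v" and "E_hat E u v = {}"
  shows "(\<Sum>S | S \<subseteq> - {u, v} \<and> card S = 2. adj_minor (compression E u v) (insert u (insert v S)))
       \<le> (\<Sum>S | S \<subseteq> - {u, v} \<and> card S = 2. adj_minor E (insert u (insert v S)))"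
  using assms by (intro sum_mono adj_minor_compression_pair_le) auto

lemma sum_minors_compression_pairs_less:
  assumes "simple_graph E" and "E_hat E u v = {}" and "x \<in> N_out E u v" and "y \<in> N_out E v u"
  shows "(\<Sum>S | S \<subseteq> - {u, v} \<and> card S = 2. adj_minor (compression E u v) (insert u (insert v S)))
       < (\<Sum>S | S \<subseteq> - {u, v} \<and> card S = 2. adj_minor E (insert u (insert v S)))"
proof (rule sum_strict_mono_ex1)
  from assms(3,4) have "u \<noteq> v" and pair: "{x, y} \<in> {S. S \<subseteq> - {u, v} \<and> card S = 2}"
    unfolding N_out_def by (auto simp: card_insert_if)
  from assms(2-4) have "\<not> E x y"
    unfolding E_hat_def by auto
  with pair show "\<exists>S \<in> {S. S \<subseteq> - {u, v} \<and> card S = 2}.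
      adj_minor (compression E u v) (insert u (insert v S)) < adj_minor E (insert u (insert v S))"
    using adj_minor_compression_pair_less[OF assms(1,3,4)] by blast
  show "finite {S. S \<subseteq> - {u, v} \<and> card S = 2}"
    by simp
  show "\<forall>S \<in> {S. S \<subseteq> - {u, v} \<and> card S = 2}.
      adj_minor (compression E u v) (insert u (insert v S)) \<le> adj_minor E (insert u (insert v S))"
    using assms(1,2) \<open>u \<noteq> v\<close> by (auto intro: adj_minor_compression_pair_le)
qed

theorem theorem3p2:
  fixes E :: "'v::finite \<Rightarrow> 'v \<Rightarrow> bool" and u v :: 'v
  assumes "simple_graph E" and "E u v" and "E_hat E u v = {}"
  shows "adj_coeff 4 E \<ge> adj_coeff 4 (compression E u v) \<and>
         (N_out E v u \<noteq> {} \<and> N_out E u v \<noteq> {} \<longrightarrow>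
           adj_coeff 4 E > adj_coeff 4 (compression E u v))"
proof -
  let ?G = "compression E u v"
  have irrefl: "\<And>H x. simple_graph H \<Longrightarrow> \<not> H x x"
    unfolding simple_graph_def by blast
  have "u \<noteq> v"
    using assms(1,2) irrefl by blast
  note split = adj_coeff_4_split[OF irrefl[OF assms(1)] \<open>u \<noteq> v\<close>]
    adj_coeff_4_split[OF irrefl[OF simple_graph_compression[OF assms(1)]] \<open>u \<noteq> v\<close>]
  have quads: "(\<Sum>S | S \<subseteq> - {u, v} \<and> card S = 4. adj_minor ?G S)
      = (\<Sum>S | S \<subseteq> - {u, v} \<and> card S = 4. adj_minor E S)"
    by (intro sum.cong refl adj_minor_compression_outside) simp
  have triples: "(\<Sum>S | S \<subseteq> - {u, v} \<and> card S = 3. adj_minor ?G (insert u S) + adj_minor ?G (insert v S))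
      \<le> (\<Sum>S | S \<subseteq> - {u, v} \<and> card S = 3. adj_minor E (insert u S) + adj_minor E (insert v S))"
    using assms(1) \<open>u \<noteq> v\<close> by (intro sum_mono adj_minor_compression_triple_le) auto
  show ?thesis
    unfolding split quads
    using triples sum_minors_compression_pairs_le[OF assms(1) \<open>u \<noteq> v\<close> assms(3)]
      sum_minors_compression_pairs_less[OF assms(1,3)]
    by fastforce
qed

end
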